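(* Let $n\in\mathbb{N}$ and let $\sigma$ be a probability distribution on $[n]$ for which there exists $i\in[n-1]$ with $\sigma_{\le i}\le\frac in$. Let $(t_1^{(s)},\dots,t_n^{(s)})$ be the state of the exponential-jump process with choice distribution $\sigma$ after $s$ steps, started from any fixed initial state. Then $\mathbb{E}[t_n^{(s)}-t_1^{(s)}]\to\infty$ as $s\to\infty$.
   Context: $\sigma_{\le i}=\Pr_{i^*\sim\sigma}[i^*\le i]$. The exponential-jump process: the state consists of $n$ tokens at real positions $t_1<\dots<t_n$. In each step, independently sample $i^*\sim\sigma$ and $X\sim\mathrm{Exp}(1)$ (exponential with rate $1$), move the $i^*$-th token from the left a distance $X$ to the right, and re-sort the positions: $(t_1,\dots,t_n)\mapsto\mathrm{sort}(t_1,\dots,t_{i^*}+X,\dots,t_n)$. *)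

theory Defs
  imports "HOL-Probability.Probability"
begin

text \<open>Positions are stored as a sorted list of length n; token indices are 0-based,
  so the paper's index i in [n] corresponds to i - 1 here.\<close>

definition Exp1 :: "real measure" where
  "Exp1 = density lborel (exponential_density 1)"

definition ej_step :: "real list \<Rightarrow> nat \<times> real \<Rightarrow> real list" where
  "ej_step t ix = sort (t[fst ix := t ! fst ix + snd ix])"

definition ej_state :: "real list \<Rightarrow> (nat \<Rightarrow> nat \<times> real) \<Rightarrow> nat \<Rightarrow> real list" where
  "ej_state t0 \<omega> s = foldl ej_step t0 (map \<omega> [0..<s])"

definition ej_noise :: "nat pmf \<Rightarrow> nat \<Rightarrow> (nat \<Rightarrow> nat \<times> real) measure" where
  "ej_noise \<sigma> s = PiM {..<s} (\<lambda>_. measure_pmf \<sigma> \<Otimes>\<^sub>M Exp1)"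

end

theory Submission
  imports Defs "HOL-Combinatorics.List_Permutation"
begin

(* Fix a threshold i with sigma({..<i}) <= i/n (tokens 0-based) and let the spread of a state be
   the mean of its n - i highest positions minus the mean of its i lowest ones, so that
   0 <= spread <= gap.  A jump of size x of token j raises the total of the positions by x, and
   the total of the i lowest ones by at most min x (t_i - t_j), and only if j < i.  Averaging
   over j ~ sigma and x ~ Exp(1), the hypothesis on sigma turns this into an expected increase
   of the spread of at least exp (-(gap + 1)) / (n - i).  Summing over the steps and applying
   Jensen's inequality, the expected gaps g_N satisfy
   g_N >= (exp (-1) / (n - i)) * (sum over s < N of exp (- g_s)), which forces g_N -> infinity. *)

section \<open>Order statistics of lists\<close>

lemma sorted_nth_le_iff_card:
  fixes v :: "'a::linorder list"
  assumes "sorted v" "k < length v"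
  shows "v ! k \<le> c \<longleftrightarrow> Suc k \<le> card {m. m < length v \<and> v ! m \<le> c}"
proof
  assume "v ! k \<le> c"
  then have "{..k} \<subseteq> {m. m < length v \<and> v ! m \<le> c}"
    using assms by (auto intro: order_trans[OF sorted_nth_mono[OF assms(1)]])
  from card_mono[OF _ this] show "Suc k \<le> card {m. m < length v \<and> v ! m \<le> c}" by simp
next
  assume card: "Suc k \<le> card {m. m < length v \<and> v ! m \<le> c}"
  show "v ! k \<le> c"
  proof (rule ccontr)
    assume "\<not> v ! k \<le> c"
    have "m < k" if "m < length v" "v ! m \<le> c" for m
      using sorted_nth_mono[OF assms(1), of k m] that \<open>\<not> v ! k \<le> c\<close> by (metis not_less order_trans)
    then have "{m. m < length v \<and> v ! m \<le> c} \<subseteq> {..<k}" by blast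
    from card_mono[OF _ this] card show False by simp
  qed
qed

text \<open>The sublevel sets of the \<open>k\<close>-th smallest entry are described by counting the entries
  \<open>\<le> c\<close>, a measurable sum of indicators.\<close>
lemma borel_measurable_sort_nth:
  fixes F :: "'a \<Rightarrow> real list"
  assumes meas: "\<And>m. m < n \<Longrightarrow> (\<lambda>x. F x ! m) \<in> borel_measurable M"
    and len: "\<And>x. length (F x) = n" and "k < n"
  shows "(\<lambda>x. sort (F x) ! k) \<in> borel_measurable M"
proof (subst borel_measurable_iff_le, intro allI)
  fix c :: real
  let ?count = "\<lambda>x. (\<Sum>m<n. indicator {..c} (F x ! m)) :: real"
  have "sort (F x) ! k \<le> c \<longleftrightarrow> real (Suc k) \<le> ?count x" for x
  proof -
    have "length (filter (\<lambda>y. y \<le> c) (sort (F x))) = length (filter (\<lambda>y. y \<le> c) (F x))"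
      by (simp add: filter_sort)
    then have "card {m. m < n \<and> sort (F x) ! m \<le> c} = card {m. m < n \<and> F x ! m \<le> c}"
      using len by (simp add: length_filter_conv_card)
    also have "real \<dots> = ?count x"
      by (simp add: indicator_def sum.If_cases lessThan_def Int_def conj_commute)
    finally have "real (card {m. m < n \<and> sort (F x) ! m \<le> c}) = ?count x" .
    then show ?thesis
      using sorted_nth_le_iff_card[of "sort (F x)" k c] len \<open>k < n\<close>
      by (simp only: length_sort sorted_sort of_nat_le_iff[symmetric, where 'a=real])
  qed
  then have "{x \<in> space M. sort (F x) ! k \<le> c} = {x \<in> space M. real (Suc k) \<le> ?count x}"
    by blast
  moreover have "?count \<in> borel_measurable M"
    using meas by (intro borel_measurable_sum measurable_compose[OF _ borel_measurable_indicator]) auto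
  ultimately show "{x \<in> space M. sort (F x) ! k \<le> c} \<in> sets M"
    by simp
qed

lemma sorted_sum_lessThan_le:
  fixes v :: "'a::linordered_idom list"
  assumes "sorted v" "J \<subseteq> {..<length v}" "card J = i"
  shows "(\<Sum>k<i. v ! k) \<le> (\<Sum>k\<in>J. v ! k)"
proof (cases "i = 0")
  case True
  then show ?thesis using assms finite_subset[OF assms(2)] by simp
next
  case False
  have "finite J" using finite_subset[OF assms(2)] by simp
  have "i \<le> length v" using card_mono[OF _ assms(2)] assms(3) by simp
  let ?c = "v ! (i - 1)"
  have "card ({..<i} - J) = card (J - {..<i})"
    using \<open>finite J\<close> assms(3) by (simp add: card_Diff_subset_Int Int_commute)
  text \<open>Exchange argument: the indices below \<open>i\<close> missed by \<open>J\<close> carry entries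
    \<open>\<le> ?c\<close>, and as many indices of \<open>J\<close> at or above \<open>i\<close> carry entries \<open>\<ge> ?c\<close>.\<close>
  moreover have "(\<Sum>k\<in>{..<i} - J. v ! k) \<le> of_nat (card ({..<i} - J)) * ?c"
    using sorted_nth_mono[OF assms(1), of _ "i - 1"] \<open>i \<le> length v\<close>
    by (intro sum_bounded_above) auto
  moreover have "of_nat (card (J - {..<i})) * ?c \<le> (\<Sum>k\<in>J - {..<i}. v ! k)"
    using sorted_nth_mono[OF assms(1), of "i - 1"] assms(2)
    by (intro sum_bounded_below) auto
  moreover have "(\<Sum>k<i. v ! k) = (\<Sum>k\<in>{..<i} \<inter> J. v ! k) + (\<Sum>k\<in>{..<i} - J. v ! k)"
    by (metis finite_lessThan sum.Int_Diff)
  moreover have "(\<Sum>k\<in>J. v ! k) = (\<Sum>k\<in>J \<inter> {..<i}. v ! k) + (\<Sum>k\<in>J - {..<i}. v ! k)"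
    using \<open>finite J\<close> by (metis sum.Int_Diff)
  ultimately show ?thesis by (simp add: Int_commute)
qed

lemma sort_sum_lessThan_le:
  fixes u :: "'a::linordered_idom list"
  assumes "I \<subseteq> {..<length u}" "card I = i"
  shows "(\<Sum>k<i. sort u ! k) \<le> (\<Sum>k\<in>I. u ! k)"
proof -
  obtain f where f: "bij_betw f {..<length u} {..<length u}" "\<forall>k<length u. sort u ! k = u ! f k"
    using permutation_Ex_bij[of "sort u" u] by auto
  define J where "J = inv_into {..<length u} f ` I"
  have f_onto: "f ` {..<length u} = {..<length u}" and f_inj: "inj_on f {..<length u}"
    using f(1) by (auto simp: bij_betw_def)
  have "J \<subseteq> {..<length u}"
    using assms(1) inv_into_into[of _ f "{..<length u}"] unfolding J_def f_onto by auto
  then have J: "J \<subseteq> {..<length u}" "f ` J = I" "inj_on f J"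
    using image_inv_into_cancel[OF f_onto assms(1)] inj_on_subset[OF f_inj] unfolding J_def by auto
  have "card J = i" using card_image[OF J(3)] J(2) assms(2) by simp
  have "(\<Sum>k\<in>I. u ! k) = (\<Sum>k\<in>J. u ! f k)"
    using sum.reindex[OF J(3), of "(!) u"] J(2) by simp
  also have "\<dots> = (\<Sum>k\<in>J. sort u ! k)"
    using f(2) J(1) by (intro sum.cong) auto
  finally show ?thesis
    using sorted_sum_lessThan_le[of "sort u" J i] J(1) \<open>card J = i\<close> by simp
qed

section \<open>The process and its noise\<close>

lemma ej_state_0 [simp]: "ej_state t0 \<omega> 0 = t0"
  by (simp add: ej_state_def)

lemma ej_state_Suc: "ej_state t0 \<omega> (Suc s) = ej_step (ej_state t0 \<omega> s) (\<omega> s)"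
  by (simp add: ej_state_def)

lemma ej_state_cong: "(\<And>r. r < s \<Longrightarrow> \<omega> r = \<omega>' r) \<Longrightarrow> ej_state t0 \<omega> s = ej_state t0 \<omega>' s"
  by (induction s) (simp_all add: ej_state_Suc)

lemma length_ej_step [simp]: "length (ej_step t y) = length t"
  by (simp add: ej_step_def)

lemma length_ej_state [simp]: "length (ej_state t0 \<omega> s) = length t0"
  by (induction s) (simp_all add: ej_state_Suc)

lemma sorted_ej_step: "sorted (ej_step t y)"
  by (simp add: ej_step_def)

lemma sorted_ej_state: "sorted t0 \<Longrightarrow> sorted (ej_state t0 \<omega> s)"
  by (cases s) (simp_all add: ej_state_Suc sorted_ej_step)

lemma borel_measurable_ej_step_nth:
  fixes T :: "'a \<Rightarrow> real list" and Y :: "'a \<Rightarrow> nat \<times> real"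
  assumes T: "\<And>m. m < n \<Longrightarrow> (\<lambda>x. T x ! m) \<in> borel_measurable M"
    and len: "\<And>x. length (T x) = n"
    and Y: "(\<lambda>x. fst (Y x)) \<in> measurable M (count_space UNIV)" "(\<lambda>x. snd (Y x)) \<in> borel_measurable M"
    and "k < n"
  shows "(\<lambda>x. ej_step (T x) (Y x) ! k) \<in> borel_measurable M"
  unfolding ej_step_def
proof (rule borel_measurable_sort_nth[where n = n])
  fix m assume "m < n"
  have "(T x)[fst (Y x) := T x ! fst (Y x) + snd (Y x)] ! m
      = (if fst (Y x) = m then T x ! m + snd (Y x) else T x ! m)" for x
    using len \<open>m < n\<close> by (cases "fst (Y x) = m") auto
  moreover have "{x \<in> space M. fst (Y x) = m} \<in> sets M"
    using measurable_sets[OF Y(1), of "{m}"] by (simp add: vimage_def Int_def conj_commute)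
  ultimately show "(\<lambda>x. (T x)[fst (Y x) := T x ! fst (Y x) + snd (Y x)] ! m) \<in> borel_measurable M"
    using T[OF \<open>m < n\<close>] Y(2) by (simp add: measurable_If)
qed (use len \<open>k < n\<close> in auto)

lemma prob_space_Exp1: "prob_space Exp1"
  unfolding Exp1_def by (rule prob_space_exponential_density) simp

lemma sets_Exp1 [simp]: "sets Exp1 = sets borel"
  by (simp add: Exp1_def)

lemma distributed_Exp1: "distributed Exp1 lborel (\<lambda>x. x) (exponential_density 1)"
  unfolding distributed_def Exp1_def by (simp add: distr_id2 exponential_density_nonneg)

lemma
  shows integrable_Exp1: "integrable Exp1 (\<lambda>x. x)"
    and integral_Exp1: "(\<integral>x. x \<partial>Exp1) = 1"
  using prob_space.erlang_ith_moment_integrable[OF prob_space_Exp1 _ distributed_Exp1, of 1]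
    prob_space.exponential_distributed_expectation[OF prob_space_Exp1 _ distributed_Exp1]
  by simp_all

lemma measure_Exp1_greaterThan: "0 \<le> r \<Longrightarrow> measure Exp1 {r<..} = exp (- r)"
  using prob_space.exponential_distributedD_gt[OF prob_space_Exp1 distributed_Exp1, of r]
  by (simp add: Exp1_def greaterThan_def)

lemma
  assumes "0 \<le> r"
  shows integrable_Exp1_affine_tail: "integrable Exp1 (\<lambda>x. a + b * x + c * indicator {r<..} x)"
    and integral_Exp1_affine_tail: "(\<integral>x. a + b * x + c * indicator {r<..} x \<partial>Exp1) = a + b + c * exp (- r)"
proof -
  interpret prob_space Exp1 by (rule prob_space_Exp1)
  have ind: "integrable Exp1 (\<lambda>x. c * indicator {r<..} x :: real)"
    by (intro integrable_mult_right integrable_real_indicator) (auto simp: emeasure_eq_measure)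
  have lin: "integrable Exp1 (\<lambda>x. a + b * x)"
    by (intro Bochner_Integration.integrable_add integrable_mult_right integrable_Exp1) simp
  show "integrable Exp1 (\<lambda>x. a + b * x + c * indicator {r<..} x)"
    using lin ind by (rule Bochner_Integration.integrable_add)
  have "(\<integral>x. a + b * x \<partial>Exp1) = a + b"
    using integral_Exp1 integrable_Exp1 by (simp add: prob_space)
  then show "(\<integral>x. a + b * x + c * indicator {r<..} x \<partial>Exp1) = a + b + c * exp (- r)"
    using lin ind measure_Exp1_greaterThan[OF assms] by simp
qed

definition ej_law :: "nat pmf \<Rightarrow> (nat \<times> real) measure" where
  "ej_law \<sigma> = measure_pmf \<sigma> \<Otimes>\<^sub>M Exp1"

lemma ej_noise_eq_PiM: "ej_noise \<sigma> s = PiM {..<s} (\<lambda>_. ej_law \<sigma>)"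
  unfolding ej_noise_def ej_law_def ..

lemma prob_space_ej_law: "prob_space (ej_law \<sigma>)"
  unfolding ej_law_def by (intro prob_space_pair prob_space_Exp1 prob_space_measure_pmf)

lemma prob_space_ej_noise: "prob_space (ej_noise \<sigma> s)"
  unfolding ej_noise_eq_PiM by (intro prob_space_PiM prob_space_ej_law)

lemma measurable_ej_law_fst: "fst \<in> measurable (ej_law \<sigma>) (count_space UNIV)"
  unfolding ej_law_def by measurable

lemma borel_measurable_ej_law_snd: "snd \<in> borel_measurable (ej_law \<sigma>)"
  unfolding ej_law_def Exp1_def by measurable

lemma borel_measurable_ej_state_nth:
  assumes "s \<le> m" "k < length t0"
  shows "(\<lambda>\<omega>. ej_state t0 \<omega> s ! k) \<in> borel_measurable (PiM {..<m} (\<lambda>_. ej_law \<sigma>))"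
  using assms
proof (induction s arbitrary: k)
  case 0
  then show ?case by simp
next
  case (Suc s)
  have \<omega>_s: "(\<lambda>\<omega>. \<omega> s) \<in> measurable (PiM {..<m} (\<lambda>_. ej_law \<sigma>)) (ej_law \<sigma>)"
    using Suc.prems by (intro measurable_component_singleton) auto
  show ?case
    unfolding ej_state_Suc using Suc
    by (intro borel_measurable_ej_step_nth[where n = "length t0"]
        measurable_compose[OF \<omega>_s measurable_ej_law_fst]
        measurable_compose[OF \<omega>_s borel_measurable_ej_law_snd]) auto
qed

lemma nn_integral_ej_state_Suc:
  assumes "(\<lambda>\<omega>. f (ej_state t0 \<omega> (Suc s))) \<in> borel_measurable (ej_noise \<sigma> (Suc s))"
  shows "(\<integral>\<^sup>+\<omega>. f (ej_state t0 \<omega> (Suc s)) \<partial>ej_noise \<sigma> (Suc s))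
       = (\<integral>\<^sup>+\<omega>. (\<integral>\<^sup>+y. f (ej_step (ej_state t0 \<omega> s) y) \<partial>ej_law \<sigma>) \<partial>ej_noise \<sigma> s)"
proof -
  interpret product_sigma_finite "\<lambda>_. ej_law \<sigma>"
    unfolding product_sigma_finite_def
    using prob_space_ej_law prob_space_imp_sigma_finite by blast
  have "{..<Suc s} = insert s {..<s}" by auto
  then have "(\<integral>\<^sup>+\<omega>. f (ej_state t0 \<omega> (Suc s)) \<partial>ej_noise \<sigma> (Suc s))
      = (\<integral>\<^sup>+\<omega>. (\<integral>\<^sup>+y. f (ej_state t0 (fun_upd \<omega> s y) (Suc s)) \<partial>ej_law \<sigma>) \<partial>ej_noise \<sigma> s)"
    using product_nn_integral_insert[of "{..<s}" s "\<lambda>\<omega>. f (ej_state t0 \<omega> (Suc s))"] assms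
    by (simp add: ej_noise_eq_PiM)
  also have "\<dots> = (\<integral>\<^sup>+\<omega>. (\<integral>\<^sup>+y. f (ej_step (ej_state t0 \<omega> s) y) \<partial>ej_law \<sigma>) \<partial>ej_noise \<sigma> s)"
    using ej_state_cong[of s "fun_upd \<omega> s y" \<omega> t0 for \<omega> y] by (simp add: ej_state_Suc)
  finally show ?thesis .
qed

lemma nn_integral_ej_law:
  assumes "f \<in> borel_measurable (ej_law \<sigma>)" "set_pmf \<sigma> \<subseteq> {..<n}"
  shows "(\<integral>\<^sup>+y. f y \<partial>ej_law \<sigma>) = (\<Sum>j<n. (\<integral>\<^sup>+x. f (j, x) \<partial>Exp1) * pmf \<sigma> j)"
proof -
  interpret Exp1: sigma_finite_measure Exp1
    using prob_space_Exp1 prob_space_imp_sigma_finite by blast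
  have "(\<integral>\<^sup>+y. f y \<partial>ej_law \<sigma>) = (\<integral>\<^sup>+j. \<integral>\<^sup>+x. f (j, x) \<partial>Exp1 \<partial>measure_pmf \<sigma>)"
    using Exp1.nn_integral_fst[of f "measure_pmf \<sigma>"] assms(1) by (simp add: ej_law_def)
  also have "\<dots> = (\<Sum>j<n. (\<integral>\<^sup>+x. f (j, x) \<partial>Exp1) * pmf \<sigma> j)"
    using assms(2) by (intro nn_integral_measure_pmf_support) auto
  finally show ?thesis .
qed

lemma nn_integral_ej_law_abs_snd_finite: "(\<integral>\<^sup>+y. ennreal \<bar>snd y\<bar> \<partial>ej_law \<sigma>) < \<infinity>"
proof -
  interpret Exp1: prob_space Exp1 by (rule prob_space_Exp1)
  have "(\<lambda>y. ennreal \<bar>snd y\<bar>) \<in> borel_measurable (ej_law \<sigma>)"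
    using borel_measurable_ej_law_snd by measurable
  then have "(\<integral>\<^sup>+y. ennreal \<bar>snd y\<bar> \<partial>ej_law \<sigma>) = (\<integral>\<^sup>+j. \<integral>\<^sup>+x. ennreal \<bar>x\<bar> \<partial>Exp1 \<partial>measure_pmf \<sigma>)"
    using Exp1.nn_integral_fst[of "\<lambda>y. ennreal \<bar>snd y\<bar>" "measure_pmf \<sigma>"]
    unfolding ej_law_def by simp
  also have "\<dots> = (\<integral>\<^sup>+x. ennreal \<bar>x\<bar> \<partial>Exp1)"
    by (simp add: measure_pmf.emeasure_space_1)
  also have "\<dots> < \<infinity>"
    using integrableD(2)[OF integrable_abs[OF integrable_Exp1]] by (simp add: less_top)
  finally show ?thesis .
qed

section \<open>Spread and gap\<close>

definition gap :: "nat \<Rightarrow> real list \<Rightarrow> real" where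
  "gap n t = t ! (n - 1) - t ! 0"

definition spread :: "nat \<Rightarrow> nat \<Rightarrow> real list \<Rightarrow> real" where
  "spread n i t = (\<Sum>k\<in>{i..<n}. t ! k) / real (n - i) - (\<Sum>k<i. t ! k) / real i"

lemma gap_nonneg: "sorted t \<Longrightarrow> length t = n \<Longrightarrow> 0 \<le> gap n t"
  unfolding gap_def by (cases "n = 0") (simp_all add: sorted_nth_mono)

lemma spread_eq:
  assumes "i \<le> n"
  shows "spread n i t = (\<Sum>k<n. t ! k) / real (n - i) - (1 / real (n - i) + 1 / real i) * (\<Sum>k<i. t ! k)"
proof -
  have "(\<Sum>k\<in>{i..<n}. t ! k) = (\<Sum>k<n. t ! k) - (\<Sum>k<i. t ! k)"
    using sum.atLeastLessThan_concat[of 0 i n "(!) t"] assms by (simp add: lessThan_atLeast0)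
  then show ?thesis
    unfolding spread_def by (simp add: diff_divide_distrib distrib_right)
qed

lemma
  assumes "sorted t" "length t = n" "0 < i" "i < n"
  shows spread_nonneg: "0 \<le> spread n i t" and spread_le_gap: "spread n i t \<le> gap n t"
proof -
  have mono: "t ! k \<le> t ! l" if "k \<le> l" "l < n" for k l
    using sorted_nth_mono[OF assms(1)] that assms(2) by simp
  have "real i * t ! 0 \<le> (\<Sum>k<i. t ! k)" "(\<Sum>k<i. t ! k) \<le> real i * t ! (i - 1)"
    using sum_bounded_below[of "{..<i}" "t ! 0" "(!) t"] sum_bounded_above[of "{..<i}" "(!) t" "t ! (i - 1)"]
      mono assms(4) by force+
  moreover have "real (n - i) * t ! (i - 1) \<le> (\<Sum>k\<in>{i..<n}. t ! k)"
    "(\<Sum>k\<in>{i..<n}. t ! k) \<le> real (n - i) * t ! (n - 1)"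
    using sum_bounded_below[of "{i..<n}" "t ! (i - 1)" "(!) t"] sum_bounded_above[of "{i..<n}" "(!) t" "t ! (n - 1)"]
      mono by force+
  moreover have "0 < real i" "0 < real (n - i)" using assms by auto
  ultimately have means: "t ! 0 \<le> (\<Sum>k<i. t ! k) / real i" "(\<Sum>k<i. t ! k) / real i \<le> t ! (i - 1)"
    "t ! (i - 1) \<le> (\<Sum>k\<in>{i..<n}. t ! k) / real (n - i)" "(\<Sum>k\<in>{i..<n}. t ! k) / real (n - i) \<le> t ! (n - 1)"
    by (simp_all add: field_simps)
  show "0 \<le> spread n i t"
    unfolding spread_def using order_trans[OF means(2,3)] by simp
  show "spread n i t \<le> gap n t"
    unfolding spread_def gap_def using diff_mono[OF means(4,1)] .
qed

text \<open>The bound \<open>t ! i - t ! j\<close> comes from exchanging index \<open>j\<close> for \<open>i\<close> among the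
  \<open>i\<close> lowest indices.\<close>
lemma sum_lessThan_sort_move_le:
  fixes t :: "'a::linordered_idom list"
  assumes "sorted t" "length t = n" "j < n" "i < n"
  shows "(\<Sum>k<i. sort (t[j := t ! j + x]) ! k) \<le> (\<Sum>k<i. t ! k) + (if j < i then min x (t ! i - t ! j) else 0)"
proof -
  let ?u = "t[j := t ! j + x]"
  have bound: "(\<Sum>k<i. sort ?u ! k) \<le> (\<Sum>k\<in>I. ?u ! k)" if "I \<subseteq> {..<n}" "card I = i" for I
    using sort_sum_lessThan_le[of I ?u i] that assms(2) by simp
  show ?thesis
  proof (cases "j < i")
    case False
    then have "(\<Sum>k<i. ?u ! k) = (\<Sum>k<i. t ! k)" by (intro sum.cong) auto
    then show ?thesis using bound[of "{..<i}"] False assms(4) by auto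
  next
    case True
    have "(\<Sum>k<i. ?u ! k) = (\<Sum>k<i. (if k = j then x else 0) + t ! k)"
      using assms by (intro sum.cong) auto
    also have "\<dots> = (\<Sum>k<i. t ! k) + x" using True by (simp add: sum.distrib)
    finally have le_x: "(\<Sum>k<i. sort ?u ! k) \<le> (\<Sum>k<i. t ! k) + x"
      using bound[of "{..<i}"] assms(4) by auto
    have I: "insert i ({..<i} - {j}) \<subseteq> {..<n}" "card (insert i ({..<i} - {j})) = i"
      using True assms(4) by (auto simp: card_Diff_singleton)
    have "(\<Sum>k\<in>insert i ({..<i} - {j}). ?u ! k) = (\<Sum>k<i. t ! k) + (t ! i - t ! j)"
      using True by (simp add: sum_diff1)
    then have "(\<Sum>k<i. sort ?u ! k) \<le> (\<Sum>k<i. t ! k) + (t ! i - t ! j)"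
      using bound[OF I] by simp
    with le_x show ?thesis using True by simp
  qed
qed

lemma spread_move_ge:
  assumes "sorted t" "length t = n" "j < n" "0 < i" "i < n"
  shows "spread n i t + x / real (n - i)
           - (1 / real (n - i) + 1 / real i) * (if j < i then min x (t ! i - t ! j) else 0)
         \<le> spread n i (sort (t[j := t ! j + x]))"
proof -
  let ?u = "t[j := t ! j + x]" and ?c = "1 / real (n - i) + 1 / real i"
  have sum_nth: "(\<Sum>k<n. v ! k) = sum_list v" if "length v = n" for v :: "real list"
    using that by (simp add: sum_list_sum_nth lessThan_atLeast0)
  have "(\<Sum>k<n. sort ?u ! k) = sum_list ?u"
    using sum_nth[of "sort ?u"] assms(2) by (simp add: sum_mset_sum_list[symmetric])
  also have "\<dots> = (\<Sum>k<n. ?u ! k)"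
    using sum_nth[of ?u] assms(2) by simp
  also have "\<dots> = (\<Sum>k<n. (if k = j then x else 0) + t ! k)"
    using assms(2) by (intro sum.cong) auto
  also have "\<dots> = (\<Sum>k<n. t ! k) + x"
    using assms(3) by (simp add: sum.distrib)
  finally have total: "(\<Sum>k<n. sort ?u ! k) = (\<Sum>k<n. t ! k) + x" .
  have "0 \<le> ?c" by simp
  from mult_left_mono[OF sum_lessThan_sort_move_le[OF assms(1-3,5)] this, of x]
  show ?thesis
    unfolding spread_eq[OF less_imp_le[OF assms(5)]] total by (simp add: add_divide_distrib algebra_simps)
qed

lemma gap_move_le:
  assumes "sorted t" "length t = n"
  shows "gap n (sort (t[j := t ! j + x])) \<le> gap n t + 2 * \<bar>x\<bar>"
proof (cases "n = 0")
  case False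
  let ?u = "t[j := t ! j + x]"
  have range: "t ! 0 - \<bar>x\<bar> \<le> z \<and> z \<le> t ! (n - 1) + \<bar>x\<bar>" if "z \<in> set ?u" for z
  proof -
    obtain k where "k < n" "z = ?u ! k" using \<open>z \<in> set ?u\<close> assms(2) by (auto simp: in_set_conv_nth)
    moreover have "t ! 0 \<le> t ! k" "t ! k \<le> t ! (n - 1)"
      using sorted_nth_mono[OF assms(1)] \<open>k < n\<close> assms(2) by auto
    ultimately show ?thesis using assms(2) by (cases "k = j") auto
  qed
  have "n - 1 < length (sort ?u)" "0 < length (sort ?u)"
    using False assms(2) by auto
  then have "sort ?u ! (n - 1) \<in> set ?u" "sort ?u ! 0 \<in> set ?u"
    using nth_mem[of "n - 1" "sort ?u"] nth_mem[of 0 "sort ?u"] by simp_all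
  then have "sort ?u ! (n - 1) \<le> t ! (n - 1) + \<bar>x\<bar>" "t ! 0 - \<bar>x\<bar> \<le> sort ?u ! 0"
    using range by blast+
  then show ?thesis unfolding gap_def by linarith
qed (simp add: gap_def)

lemma borel_measurable_spread:
  assumes "\<And>k. k < n \<Longrightarrow> (\<lambda>x. T x ! k) \<in> borel_measurable M" "i \<le> n"
  shows "(\<lambda>x. spread n i (T x)) \<in> borel_measurable M"
  unfolding spread_def using assms
  by (intro borel_measurable_diff borel_measurable_divide borel_measurable_sum) auto

lemma borel_measurable_gap:
  assumes "\<And>k. k < n \<Longrightarrow> (\<lambda>x. T x ! k) \<in> borel_measurable M" "0 < n"
  shows "(\<lambda>x. gap n (T x)) \<in> borel_measurable M"
  unfolding gap_def using assms by (intro borel_measurable_diff) auto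

lemma nn_integral_gap_step_le:
  assumes "sorted t" "length t = n"
  shows "(\<integral>\<^sup>+y. gap n (ej_step t y) \<partial>ej_law \<sigma>) \<le> gap n t + 2 * (\<integral>\<^sup>+y. ennreal \<bar>snd y\<bar> \<partial>ej_law \<sigma>)"
proof -
  interpret prob_space "ej_law \<sigma>" by (rule prob_space_ej_law)
  have "(\<integral>\<^sup>+y. gap n (ej_step t y) \<partial>ej_law \<sigma>) \<le> (\<integral>\<^sup>+y. ennreal (gap n t + 2 * \<bar>snd y\<bar>) \<partial>ej_law \<sigma>)"
    using gap_move_le[OF assms] by (intro nn_integral_mono ennreal_leI) (simp add: ej_step_def)
  also have "\<dots> = (\<integral>\<^sup>+y. ennreal (gap n t) + 2 * ennreal \<bar>snd y\<bar> \<partial>ej_law \<sigma>)"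
    using gap_nonneg[OF assms] by (intro nn_integral_cong) (simp add: ennreal_plus ennreal_mult)
  also have "\<dots> = gap n t + 2 * (\<integral>\<^sup>+y. ennreal \<bar>snd y\<bar> \<partial>ej_law \<sigma>)"
    using borel_measurable_ej_law_snd
    by (simp add: nn_integral_add nn_integral_cmult emeasure_space_1)
  finally show ?thesis .
qed

section \<open>Drift of the spread\<close>

locale ej_threshold =
  fixes n i :: nat and \<sigma> :: "nat pmf"
  assumes supp: "set_pmf \<sigma> \<subseteq> {..<n}" and i_pos: "0 < i" and i_less: "i < n"
    and prob_below: "measure_pmf.prob \<sigma> {..<i} \<le> real i / real n"
begin

lemma threshold_weight_le: "(1 / real (n - i) + 1 / real i) * measure_pmf.prob \<sigma> {..<i} \<le> 1 / real (n - i)"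
proof -
  have "(1 / real (n - i) + 1 / real i) * measure_pmf.prob \<sigma> {..<i} \<le> (1 / real (n - i) + 1 / real i) * (real i / real n)"
    using prob_below by (intro mult_left_mono) auto
  also have "\<dots> = 1 / real (n - i)"
    using i_pos i_less by (simp add: field_simps of_nat_diff)
  finally show ?thesis .
qed

lemma sum_pmf_below_threshold: "(\<Sum>j<n. (a - b * of_bool (j < i)) * pmf \<sigma> j) = a - b * measure_pmf.prob \<sigma> {..<i}"
proof -
  have "(\<Sum>j<n. of_bool (j < i) * pmf \<sigma> j) = (\<Sum>j<i. of_bool (j < i) * pmf \<sigma> j)"
    using i_less by (intro sum.mono_neutral_right) auto
  then have below: "(\<Sum>j<n. of_bool (j < i) * pmf \<sigma> j) = (\<Sum>j<i. pmf \<sigma> j)" by simp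
  have total: "(\<Sum>j<n. pmf \<sigma> j) = 1"
    using sum_pmf_eq_1[of "{..<n}" \<sigma>] supp by simp
  have "(\<Sum>j<n. (a - b * of_bool (j < i)) * pmf \<sigma> j)
      = (\<Sum>j<n. a * pmf \<sigma> j - b * (of_bool (j < i) * pmf \<sigma> j))"
    by (intro sum.cong) (simp_all add: algebra_simps)
  also have "\<dots> = a * (\<Sum>j<n. pmf \<sigma> j) - b * (\<Sum>j<n. of_bool (j < i) * pmf \<sigma> j)"
    by (simp only: sum_subtractf sum_distrib_left)
  finally show ?thesis
    using below total by (simp add: measure_measure_pmf_finite)
qed

lemma spread_step_ge_affine_tail:
  assumes t: "sorted t" "length t = n" and "j < n"
  defines "c \<equiv> 1 / real (n - i) + 1 / real i"
  shows "spread n i t + (1 / real (n - i) - c * of_bool (j < i)) * x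
           + c * of_bool (j < i) * indicator {gap n t + 1<..} x
         \<le> spread n i (ej_step t (j, x))"
proof -
  text \<open>Token \<open>j\<close> lies at most \<open>gap n t\<close> below token \<open>i\<close>,
    so when \<open>x > gap n t + 1\<close> the truncation saves at least \<open>1\<close>.\<close>
  have "t ! i \<le> t ! (n - 1)" "t ! 0 \<le> t ! j"
    using sorted_nth_mono[OF t(1)] t(2) i_less \<open>j < n\<close> by auto
  then have "t ! i - t ! j \<le> gap n t" unfolding gap_def by linarith
  then have "(if j < i then min x (t ! i - t ! j) else 0)
      \<le> of_bool (j < i) * (x - indicator {gap n t + 1<..} x)"
    by (auto simp: indicator_def)
  from mult_left_mono[OF this, of c] show ?thesis
    using spread_move_ge[OF t \<open>j < n\<close> i_pos i_less, of x]
    unfolding c_def ej_step_def by (simp add: algebra_simps)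
qed

lemma integrable_spread_step:
  assumes t: "sorted t" "length t = n"
  shows "integrable Exp1 (\<lambda>x. spread n i (ej_step t (j, x)))"
proof (rule Bochner_Integration.integrable_bound)
  show "integrable Exp1 (\<lambda>x. gap n t + 2 * \<bar>x\<bar>)"
    using integrable_Exp1_affine_tail[of 0 "gap n t" 0 0] integrable_abs[OF integrable_Exp1]
    by (intro Bochner_Integration.integrable_add integrable_mult_right) simp_all
  have "(\<lambda>x. ej_step t (j, x) ! k) \<in> borel_measurable Exp1" if "k < n" for k
    using that t(2)
    by (intro borel_measurable_ej_step_nth[where n = n]) (simp_all add: measurable_cong_sets[OF sets_Exp1 refl])
  then show "(\<lambda>x. spread n i (ej_step t (j, x))) \<in> borel_measurable Exp1"
    using i_less by (intro borel_measurable_spread) auto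
  have "0 \<le> spread n i (ej_step t (j, x)) \<and> spread n i (ej_step t (j, x)) \<le> gap n t + 2 * \<bar>x\<bar>" for x
  proof -
    have "sorted (ej_step t (j, x))" "length (ej_step t (j, x)) = n"
      using sorted_ej_step t(2) by simp_all
    moreover have "gap n (ej_step t (j, x)) \<le> gap n t + 2 * \<bar>x\<bar>"
      using gap_move_le[OF t, of j x] unfolding ej_step_def by simp
    ultimately show ?thesis
      using spread_nonneg[of _ n i] spread_le_gap[of _ n i] i_pos i_less by fastforce
  qed
  then show "AE x in Exp1. norm (spread n i (ej_step t (j, x))) \<le> norm (gap n t + 2 * \<bar>x\<bar>)"
    using gap_nonneg[OF t] by (intro AE_I2) (simp add: abs_of_nonneg)
qed

lemma integral_spread_step_ge:
  assumes t: "sorted t" "length t = n" and "j < n"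
  defines "c \<equiv> 1 / real (n - i) + 1 / real i"
  shows "spread n i t + 1 / real (n - i) - c * (1 - exp (- (gap n t + 1))) * of_bool (j < i)
         \<le> (\<integral>x. spread n i (ej_step t (j, x)) \<partial>Exp1)"
proof -
  have "0 \<le> gap n t + 1" using gap_nonneg[OF t] by simp
  let ?L = "\<lambda>x. spread n i t + (1 / real (n - i) - c * of_bool (j < i)) * x
    + c * of_bool (j < i) * indicator {gap n t + 1<..} x"
  have "(\<integral>x. ?L x \<partial>Exp1) \<le> (\<integral>x. spread n i (ej_step t (j, x)) \<partial>Exp1)"
    using spread_step_ge_affine_tail[OF t \<open>j < n\<close>] unfolding c_def
    by (intro integral_mono integrable_Exp1_affine_tail[OF \<open>0 \<le> gap n t + 1\<close>] integrable_spread_step[OF t])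
  then show ?thesis
    unfolding integral_Exp1_affine_tail[OF \<open>0 \<le> gap n t + 1\<close>] by (simp add: algebra_simps)
qed

lemma nn_integral_spread_step_eq:
  assumes t: "sorted t" "length t = n"
  shows "(\<integral>\<^sup>+y. spread n i (ej_step t y) \<partial>ej_law \<sigma>)
    = ennreal (\<Sum>j<n. (\<integral>x. spread n i (ej_step t (j, x)) \<partial>Exp1) * pmf \<sigma> j)"
proof -
  have nonneg: "0 \<le> spread n i (ej_step t y)" for y
    using spread_nonneg[OF sorted_ej_step _ i_pos i_less] t(2) by simp
  have "(\<lambda>y. ej_step t y ! k) \<in> borel_measurable (ej_law \<sigma>)" if "k < n" for k
    using that t(2) measurable_ej_law_fst borel_measurable_ej_law_snd
    by (intro borel_measurable_ej_step_nth[where n = n]) auto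
  then have "(\<lambda>y. spread n i (ej_step t y)) \<in> borel_measurable (ej_law \<sigma>)"
    using i_less by (intro borel_measurable_spread) auto
  then have "(\<integral>\<^sup>+y. spread n i (ej_step t y) \<partial>ej_law \<sigma>)
      = (\<Sum>j<n. (\<integral>\<^sup>+x. spread n i (ej_step t (j, x)) \<partial>Exp1) * pmf \<sigma> j)"
    using supp by (intro nn_integral_ej_law) auto
  also have "\<dots> = (\<Sum>j<n. ennreal ((\<integral>x. spread n i (ej_step t (j, x)) \<partial>Exp1) * pmf \<sigma> j))"
    using integrable_spread_step[OF t] nonneg
    by (intro sum.cong) (simp_all add: nn_integral_eq_integral ennreal_mult integral_nonneg)
  also have "\<dots> = ennreal (\<Sum>j<n. (\<integral>x. spread n i (ej_step t (j, x)) \<partial>Exp1) * pmf \<sigma> j)"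
    using nonneg by (intro sum_ennreal) (simp add: integral_nonneg)
  finally show ?thesis .
qed

lemma nn_integral_spread_step_ge:
  assumes t: "sorted t" "length t = n"
  shows "ennreal (spread n i t + exp (- (gap n t + 1)) / real (n - i))
    \<le> (\<integral>\<^sup>+y. spread n i (ej_step t y) \<partial>ej_law \<sigma>)"
proof -
  define c where "c = 1 / real (n - i) + 1 / real i"
  define E where "E = exp (- (gap n t + 1))"
  have "E \<le> 1" using gap_nonneg[OF t] unfolding E_def by simp
  then have "(1 - E) * (c * measure_pmf.prob \<sigma> {..<i}) \<le> (1 - E) * (1 / real (n - i))"
    using threshold_weight_le unfolding c_def by (intro mult_left_mono) simp_all
  then have "spread n i t + E * (1 / real (n - i))
      \<le> spread n i t + 1 / real (n - i) - c * (1 - E) * measure_pmf.prob \<sigma> {..<i}"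
    by (simp add: algebra_simps diff_divide_distrib)
  then have "spread n i t + E / real (n - i)
      \<le> spread n i t + 1 / real (n - i) - c * (1 - E) * measure_pmf.prob \<sigma> {..<i}"
    by simp
  also have "\<dots> = (\<Sum>j<n. (spread n i t + 1 / real (n - i) - c * (1 - E) * of_bool (j < i)) * pmf \<sigma> j)"
    by (rule sum_pmf_below_threshold[symmetric])
  also have "\<dots> \<le> (\<Sum>j<n. (\<integral>x. spread n i (ej_step t (j, x)) \<partial>Exp1) * pmf \<sigma> j)"
    using integral_spread_step_ge[OF t] unfolding E_def c_def
    by (intro sum_mono mult_right_mono) simp_all
  finally show ?thesis
    unfolding nn_integral_spread_step_eq[OF t] E_def by (rule ennreal_leI)
qed

end

section \<open>Divergence of the expected gap\<close>

lemma filterlim_at_top_if_sum_exp_neg_le: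
  fixes g :: "nat \<Rightarrow> real"
  assumes "0 < \<delta>" and le: "\<And>N. \<delta> * (\<Sum>s<N. exp (- g s)) \<le> g N"
  shows "filterlim g at_top sequentially"
proof (cases "summable (\<lambda>s. exp (- g s))")
  case True
  have "filterlim (\<lambda>s. exp (- g s)) (at_right 0) sequentially"
    using summable_LIMSEQ_zero[OF True] by (rule tendsto_imp_filterlim_at_right) simp
  from filterlim_compose[OF ln_at_0 this] show ?thesis
    by (simp add: filterlim_uminus_at_bot)
next
  case False
  have "filterlim (\<lambda>N. \<Sum>s<N. exp (- g s)) at_top sequentially"
    unfolding filterlim_at_top eventually_sequentially
  proof
    fix Z
    have "\<not> (\<forall>N. (\<Sum>s<N. exp (- g s)) \<le> Z)"
      using False summableI_nonneg_bounded[of "\<lambda>s. exp (- g s)" Z] by auto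
    then obtain N where N: "Z < (\<Sum>s<N. exp (- g s))"
      by (auto simp: not_le)
    have "Z \<le> (\<Sum>s<M. exp (- g s))" if "N \<le> M" for M
    proof -
      have "(\<Sum>s<N. exp (- g s)) \<le> (\<Sum>s<M. exp (- g s))"
        using that by (intro sum_mono2) auto
      with N show ?thesis by simp
    qed
    then show "\<exists>N. \<forall>M\<ge>N. Z \<le> (\<Sum>s<M. exp (- g s))" by blast
  qed
  with \<open>0 < \<delta>\<close> have "filterlim (\<lambda>N. \<delta> * (\<Sum>s<N. exp (- g s))) at_top sequentially"
    by (intro filterlim_tendsto_pos_mult_at_top[OF tendsto_const])
  then show ?thesis
    by (rule filterlim_at_top_mono) (simp add: le)
qed

definition ej_expectation :: "nat pmf \<Rightarrow> real list \<Rightarrow> (real list \<Rightarrow> real) \<Rightarrow> nat \<Rightarrow> real" where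
  "ej_expectation \<sigma> t0 f s = (\<integral>\<omega>. f (ej_state t0 \<omega> s) \<partial>ej_noise \<sigma> s)"

locale ej_run = ej_threshold +
  fixes t0 :: "real list"
  assumes length_t0: "length t0 = n" and sorted_t0: "sorted t0"
begin

lemma sorted_state: "sorted (ej_state t0 \<omega> s)"
  using sorted_ej_state[OF sorted_t0] .

lemma length_state: "length (ej_state t0 \<omega> s) = n"
  using length_t0 by simp

lemma borel_measurable_state_nth: "k < n \<Longrightarrow> (\<lambda>\<omega>. ej_state t0 \<omega> s ! k) \<in> borel_measurable (ej_noise \<sigma> s)"
  unfolding ej_noise_eq_PiM using length_t0 by (intro borel_measurable_ej_state_nth) auto

lemma borel_measurable_spread_state: "(\<lambda>\<omega>. spread n i (ej_state t0 \<omega> s)) \<in> borel_measurable (ej_noise \<sigma> s)"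
  using borel_measurable_state_nth i_less by (intro borel_measurable_spread) auto

lemma borel_measurable_gap_state: "(\<lambda>\<omega>. gap n (ej_state t0 \<omega> s)) \<in> borel_measurable (ej_noise \<sigma> s)"
  using borel_measurable_state_nth i_less by (intro borel_measurable_gap) auto

lemma nn_integral_gap_state_le:
  "(\<integral>\<^sup>+\<omega>. gap n (ej_state t0 \<omega> s) \<partial>ej_noise \<sigma> s)
    \<le> gap n t0 + of_nat s * (2 * (\<integral>\<^sup>+y. ennreal \<bar>snd y\<bar> \<partial>ej_law \<sigma>))"
proof (induction s)
  case 0
  interpret prob_space "ej_noise \<sigma> 0" by (rule prob_space_ej_noise)
  show ?case by (simp add: emeasure_space_1)
next
  case (Suc s)
  interpret prob_space "ej_noise \<sigma> s" by (rule prob_space_ej_noise)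
  let ?K = "2 * (\<integral>\<^sup>+y. ennreal \<bar>snd y\<bar> \<partial>ej_law \<sigma>)"
  have "(\<integral>\<^sup>+\<omega>. gap n (ej_state t0 \<omega> (Suc s)) \<partial>ej_noise \<sigma> (Suc s))
      = (\<integral>\<^sup>+\<omega>. (\<integral>\<^sup>+y. gap n (ej_step (ej_state t0 \<omega> s) y) \<partial>ej_law \<sigma>) \<partial>ej_noise \<sigma> s)"
    using borel_measurable_gap_state by (intro nn_integral_ej_state_Suc) measurable
  also have "\<dots> \<le> (\<integral>\<^sup>+\<omega>. ennreal (gap n (ej_state t0 \<omega> s)) + ?K \<partial>ej_noise \<sigma> s)"
    by (intro nn_integral_mono nn_integral_gap_step_le sorted_state length_state)
  also have "\<dots> = (\<integral>\<^sup>+\<omega>. gap n (ej_state t0 \<omega> s) \<partial>ej_noise \<sigma> s) + ?K"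
    using borel_measurable_gap_state by (simp add: nn_integral_add emeasure_space_1)
  also have "\<dots> \<le> gap n t0 + of_nat (Suc s) * ?K"
    using Suc.IH by (simp add: add_right_mono algebra_simps)
  finally show ?case .
qed

lemma integrable_gap_state: "integrable (ej_noise \<sigma> s) (\<lambda>\<omega>. gap n (ej_state t0 \<omega> s))"
proof (rule integrableI_nonneg)
  have "gap n t0 + of_nat s * (2 * (\<integral>\<^sup>+y. ennreal \<bar>snd y\<bar> \<partial>ej_law \<sigma>)) < \<infinity>"
    using nn_integral_ej_law_abs_snd_finite by (simp add: ennreal_mult_less_top of_nat_less_top)
  then show "(\<integral>\<^sup>+\<omega>. gap n (ej_state t0 \<omega> s) \<partial>ej_noise \<sigma> s) < \<infinity>"
    using nn_integral_gap_state_le le_less_trans by blast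
qed (use borel_measurable_gap_state gap_nonneg[OF sorted_state length_state] in auto)

lemma integrable_spread_state: "integrable (ej_noise \<sigma> s) (\<lambda>\<omega>. spread n i (ej_state t0 \<omega> s))"
  using spread_nonneg[OF sorted_state length_state i_pos i_less] spread_le_gap[OF sorted_state length_state i_pos i_less]
    gap_nonneg[OF sorted_state length_state]
  by (intro Bochner_Integration.integrable_bound[OF integrable_gap_state borel_measurable_spread_state] AE_I2)
    (simp add: abs_of_nonneg)

lemma integrable_exp_gap_state: "integrable (ej_noise \<sigma> s) (\<lambda>\<omega>. exp (- (gap n (ej_state t0 \<omega> s) + 1)))"
proof -
  interpret prob_space "ej_noise \<sigma> s" by (rule prob_space_ej_noise)
  have "norm (exp (- (gap n (ej_state t0 \<omega> s) + 1))) \<le> 1" for \<omega>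
    using gap_nonneg[OF sorted_state length_state, of \<omega> s] by simp
  then show ?thesis
    using borel_measurable_gap_state by (intro integrable_const_bound[where B = 1] AE_I2) auto
qed

lemma expectation_spread_Suc_ge:
  "ej_expectation \<sigma> t0 (spread n i) s + ej_expectation \<sigma> t0 (\<lambda>t. exp (- (gap n t + 1))) s / real (n - i)
    \<le> ej_expectation \<sigma> t0 (spread n i) (Suc s)"
proof -
  let ?X = "\<lambda>\<omega>. spread n i (ej_state t0 \<omega> s) + exp (- (gap n (ej_state t0 \<omega> s) + 1)) / real (n - i)"
  have "ennreal (ej_expectation \<sigma> t0 (spread n i) s + ej_expectation \<sigma> t0 (\<lambda>t. exp (- (gap n t + 1))) s / real (n - i))
      = (\<integral>\<^sup>+\<omega>. ?X \<omega> \<partial>ej_noise \<sigma> s)"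
    using integrable_spread_state integrable_exp_gap_state spread_nonneg[OF sorted_state length_state i_pos i_less]
    by (subst nn_integral_eq_integral) (auto simp: ej_expectation_def)
  also have "\<dots> \<le> (\<integral>\<^sup>+\<omega>. (\<integral>\<^sup>+y. spread n i (ej_step (ej_state t0 \<omega> s) y) \<partial>ej_law \<sigma>) \<partial>ej_noise \<sigma> s)"
    by (intro nn_integral_mono nn_integral_spread_step_ge sorted_state length_state)
  also have "\<dots> = (\<integral>\<^sup>+\<omega>. spread n i (ej_state t0 \<omega> (Suc s)) \<partial>ej_noise \<sigma> (Suc s))"
    using borel_measurable_spread_state by (intro nn_integral_ej_state_Suc[symmetric]) measurable
  also have "\<dots> = ennreal (ej_expectation \<sigma> t0 (spread n i) (Suc s))"
    using integrable_spread_state spread_nonneg[OF sorted_state length_state i_pos i_less]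
    by (subst nn_integral_eq_integral) (auto simp: ej_expectation_def)
  finally show ?thesis
    using spread_nonneg[OF sorted_state length_state i_pos i_less]
    by (subst (asm) ennreal_le_iff) (auto simp: ej_expectation_def)
qed

lemma sum_expectation_exp_gap_le:
  "(\<Sum>s<N. ej_expectation \<sigma> t0 (\<lambda>t. exp (- (gap n t + 1))) s) / real (n - i)
    \<le> ej_expectation \<sigma> t0 (spread n i) N"
proof (induction N)
  case 0
  interpret prob_space "ej_noise \<sigma> 0" by (rule prob_space_ej_noise)
  show ?case
    using spread_nonneg[OF sorted_t0 length_t0 i_pos i_less] by (simp add: ej_expectation_def prob_space)
next
  case (Suc N)
  then show ?case
    using expectation_spread_Suc_ge[of N] by (simp add: add_divide_distrib)
qed

lemma exp_expectation_gap_le: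
  "exp (- (ej_expectation \<sigma> t0 (gap n) s + 1)) \<le> ej_expectation \<sigma> t0 (\<lambda>t. exp (- (gap n t + 1))) s"
proof -
  interpret prob_space "ej_noise \<sigma> s" by (rule prob_space_ej_noise)
  have "convex_on UNIV (\<lambda>x::real. exp (- (x + 1)))"
    by (rule convex_on_realI[where f' = "\<lambda>x. - exp (- (x + 1))"]) (auto intro!: derivative_eq_intros)
  then show ?thesis
    unfolding ej_expectation_def
    using integrable_gap_state integrable_exp_gap_state
    by (intro jensens_inequality[where I = UNIV]) auto
qed

lemma expectation_gap_tendsto_at_top: "filterlim (ej_expectation \<sigma> t0 (gap n)) at_top sequentially"
proof (rule filterlim_at_top_if_sum_exp_neg_le)
  show "0 < exp (- 1) / real (n - i)" using i_less by simp
  fix N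
  have "exp (- 1) / real (n - i) * (\<Sum>s<N. exp (- ej_expectation \<sigma> t0 (gap n) s))
      = (\<Sum>s<N. exp (- 1) * exp (- ej_expectation \<sigma> t0 (gap n) s)) / real (n - i)"
    by (simp add: sum_distrib_left sum_divide_distrib)
  also have "\<dots> = (\<Sum>s<N. exp (- (ej_expectation \<sigma> t0 (gap n) s + 1))) / real (n - i)"
    by (simp only: minus_add_distrib exp_add mult.commute)
  also have "\<dots> \<le> (\<Sum>s<N. ej_expectation \<sigma> t0 (\<lambda>t. exp (- (gap n t + 1))) s) / real (n - i)"
    by (intro divide_right_mono sum_mono exp_expectation_gap_le) simp
  also have "\<dots> \<le> ej_expectation \<sigma> t0 (spread n i) N"
    by (rule sum_expectation_exp_gap_le)
  also have "\<dots> \<le> ej_expectation \<sigma> t0 (gap n) N"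
    unfolding ej_expectation_def using integrable_spread_state integrable_gap_state
    by (intro integral_mono spread_le_gap[OF sorted_state length_state i_pos i_less])
  finally show "exp (- 1) / real (n - i) * (\<Sum>s<N. exp (- ej_expectation \<sigma> t0 (gap n) s))
      \<le> ej_expectation \<sigma> t0 (gap n) N" .
qed

end

theorem lemma12:
  fixes n :: nat and \<sigma> :: "nat pmf" and t0 :: "real list"
  assumes supp: "set_pmf \<sigma> \<subseteq> {..<n}"
    and ex_i: "\<exists>i\<in>{1..n-1}. measure_pmf.prob \<sigma> {..<i} \<le> real i / real n"
    and len: "length t0 = n"
    and sorted0: "sorted_wrt (<) t0"
  shows "filterlim (\<lambda>s. \<integral>\<omega>. (ej_state t0 \<omega> s ! (n - 1) - ej_state t0 \<omega> s ! 0) \<partial>ej_noise \<sigma> s)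
           at_top sequentially"
proof -
  obtain i where i: "i \<in> {1..n-1}" "measure_pmf.prob \<sigma> {..<i} \<le> real i / real n"
    using ex_i by blast
  have "sorted t0"
    using sorted0 by (rule sorted_wrt_mono_rel[rotated]) simp
  then interpret ej_run n i \<sigma> t0
    using supp i len by unfold_locales auto
  show ?thesis
    using expectation_gap_tendsto_at_top unfolding ej_expectation_def gap_def .
qed

end
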